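(* For all $a,b>0$, $A(a,b)\le\lambda_s(a,b)\le S(a,b)$ whenever $2\le s\le 5$. These bounds are best possible: the inequality $A(a,b)\le\lambda_s(a,b)$ holds for all $a,b>0$ if and only if $s\ge 2$, and the inequality $\lambda_s(a,b)\le S(a,b)$ holds for all $a,b>0$ if and only if $s\le 5$.
   Context: For $a,b>0$ with $a\neq b$ define $$\lambda_s(a,b)=\begin{cases}\dfrac{s-1}{s+1}\cdot\dfrac{a^{s+1}+b^{s+1}-2\left(\frac{a+b}{2}\right)^{s+1}}{a^s+b^s-2\left(\frac{a+b}{2}\right)^s}, & s\in\mathbb{R}\setminus\{-1,0,1\},\\[3mm] \dfrac{2\log\frac{a+b}{2}-\log a-\log b}{\frac{1}{2a}+\frac{1}{2b}-\frac{2}{a+b}}, & s=-1,\\[3mm] \dfrac{a\log a+b\log b-(a+b)\log\frac{a+b}{2}}{2\log\frac{a+b}{2}-\log a-\log b}, & s=0,\\[3mm] \dfrac{(b-a)^2}{4\left(a\log a+b\log b-(a+b)\log\frac{a+b}{2}\right)}, & s=1,\end{cases}$$ and $\lambda_s(a,a)=a$. The arithmetic mean is $A(a,b)=(a+b)/2$ and the Gini mean is $S(a,b)=a^{a/(a+b)}\,b^{b/(a+b)}$. *)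

theory Defs
  imports "HOL-Analysis.Analysis"
begin

definition lam :: "real \<Rightarrow> real \<Rightarrow> real \<Rightarrow> real" where
  "lam s a b =
    (if a = b then a
     else if s = -1 then
       (2 * ln ((a+b)/2) - ln a - ln b) / (1/(2*a) + 1/(2*b) - 2/(a+b))
     else if s = 0 then
       (a * ln a + b * ln b - (a+b) * ln ((a+b)/2)) / (2 * ln ((a+b)/2) - ln a - ln b)
     else if s = 1 then
       (b - a)^2 / (4 * (a * ln a + b * ln b - (a+b) * ln ((a+b)/2)))
     else
       (s - 1) / (s + 1) *
       ((a powr (s+1) + b powr (s+1) - 2 * ((a+b)/2) powr (s+1)) /
        (a powr s + b powr s - 2 * ((a+b)/2) powr s)))"

definition AM :: "real \<Rightarrow> real \<Rightarrow> real" where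
  "AM a b = (a + b) / 2"

definition Gini :: "real \<Rightarrow> real \<Rightarrow> real" where
  "Gini a b = a powr (a/(a+b)) * b powr (b/(a+b))"

end

(*
  Let F_p be a second antiderivative of t^(p-2) on t > 0 (logarithmic for p = 0, 1) and
  Delta_p(a,b) = F_p(a) + F_p(b) - 2 F_p((a+b)/2) > 0 its Jensen gap, so that
  lambda_s = Delta_(s+1) / Delta_s.  For s < r and c = lambda_s(a,b) the combination
  F_(r+1) - c F_r - c^(r-s) (F_(s+1) - c F_s) has second derivative
  t^(s-2) (t - c) (t^(r-s) - c^(r-s)) >= 0, vanishing only at c; its Jensen gap is therefore
  positive, which says exactly lambda_s(a,b) < lambda_r(a,b).  Since lambda_2 = A, the lower
  bound holds precisely for s >= 2.

  For the upper bound write a, b = m (1 -+ x).  Then lambda_5 = m (30 + 30x^2 + 2x^4)/(30 + 15x^2)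
  and S = m exp(phi x) with phi x = ((1-x) ln(1-x) + (1+x) ln(1+x))/2; the difference of phi
  and the logarithm of that ratio vanishes to second order at 0 and is convex on [0,1), so
  lambda_5 <= S.  For s > 5 the expansion lambda_s(1-x,1+x) - S(1-x,1+x) = (s-5) x^2/6 + o(x^2)
  shows that lambda_s <= S fails near the diagonal.
*)

theory Submission
  imports Defs "HOL-Real_Asymp.Real_Asymp"
begin

lemma DERIV_nonneg_off_point_imp_increasing:
  fixes g g' :: "real \<Rightarrow> real"
  assumes "x < y"
    and der: "\<And>t. x \<le> t \<Longrightarrow> t \<le> y \<Longrightarrow> (g has_real_derivative g' t) (at t)"
    and nonneg: "\<And>t. x \<le> t \<Longrightarrow> t \<le> y \<Longrightarrow> 0 \<le> g' t"
    and pos: "\<And>t. x \<le> t \<Longrightarrow> t \<le> y \<Longrightarrow> t \<noteq> c \<Longrightarrow> 0 < g' t"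
  shows "g x < g y"
proof -
  define w where "w = (x + y) / 2"
  have w: "x < w" "w < y"
    using \<open>x < y\<close> by (auto simp: w_def)
  have less: "g u < g v" if "x \<le> u" "u < v" "v \<le> y" "c \<notin> {u<..<v}" for u v
  proof (rule DERIV_pos_imp_increasing_open[OF \<open>u < v\<close>])
    show "\<exists>d. (g has_real_derivative d) (at t) \<and> 0 < d" if "u < t" "t < v" for t
    proof (intro exI conjI)
      show "(g has_real_derivative g' t) (at t)"
        using der that \<open>x \<le> u\<close> \<open>v \<le> y\<close> by simp
      have "t \<noteq> c"
        using that \<open>c \<notin> {u<..<v}\<close> by auto
      then show "0 < g' t"
        using pos that \<open>x \<le> u\<close> \<open>v \<le> y\<close> by simp
    qed
    show "continuous_on {u..v} g"
    proof (rule DERIV_atLeastAtMost_imp_continuous_on)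
      fix t
      assume "u \<le> t" "t \<le> v"
      then show "\<exists>d. (g has_real_derivative d) (at t)"
        using der[of t] that by auto
    qed
  qed
  have le: "g u \<le> g v" if "x \<le> u" "u \<le> v" "v \<le> y" for u v
  proof (rule DERIV_nonneg_imp_nondecreasing[OF \<open>u \<le> v\<close>])
    fix t
    assume "u \<le> t" "t \<le> v"
    then show "\<exists>d. (g has_real_derivative d) (at t) \<and> 0 \<le> d"
      using der[of t] nonneg[of t] that by auto
  qed
  show ?thesis
  proof (cases "c \<in> {x<..<w}")
    case True
    then have "c \<notin> {w<..<y}" by auto
    then show ?thesis using less[of w y] le[of x w] w by fastforce
  next
    case False
    then show ?thesis using less[of x w] le[of w y] w by fastforce
  qed
qed

lemma midpoint_gap_pos:
  fixes f f' f'' :: "real \<Rightarrow> real"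
  assumes "0 < a" "0 < b" "a \<noteq> b"
    and f': "\<And>t. 0 < t \<Longrightarrow> (f has_real_derivative f' t) (at t)"
    and f'': "\<And>t. 0 < t \<Longrightarrow> (f' has_real_derivative f'' t) (at t)"
    and nonneg: "\<And>t. 0 < t \<Longrightarrow> 0 \<le> f'' t"
    and pos: "\<And>t. 0 < t \<Longrightarrow> t \<noteq> c \<Longrightarrow> 0 < f'' t"
  shows "2 * f ((a + b) / 2) < f a + f b"
proof -
  have ordered: "2 * f ((u + v) / 2) < f u + f v" if "0 < u" "u < v" for u v
  proof -
    define m where "m = (u + v) / 2"
    have m: "u < m" "m < v" "m - u = v - m"
      using that by (auto simp: m_def field_simps)
    obtain z1 where z1: "u < z1" "z1 < m" "f m - f u = (m - u) * f' z1"
      using MVT2[OF \<open>u < m\<close>, of f f'] f' \<open>0 < u\<close> by force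
    obtain z2 where z2: "m < z2" "z2 < v" "f v - f m = (v - m) * f' z2"
      using MVT2[OF \<open>m < v\<close>, of f f'] f' \<open>0 < u\<close> m by force
    have "f' z1 < f' z2"
      using f'' nonneg pos z1 z2 \<open>0 < u\<close>
      by (intro DERIV_nonneg_off_point_imp_increasing[of z1 z2 f' f'' c]) auto
    then have "(m - u) * f' z1 < (v - m) * f' z2"
      using m by (metis mult_strict_left_mono diff_gt_0_iff_gt)
    then show ?thesis
      using z1 z2 by (simp add: m_def)
  qed
  show ?thesis
    using ordered[of a b] ordered[of b a] assms(1-3) by (cases "a < b") (auto simp: add.commute)
qed

lemma deriv2_nonneg_imp_above_tangent:
  fixes f f' f'' :: "real \<Rightarrow> real"
  assumes "a \<le> x"
    and f': "\<And>t. a \<le> t \<Longrightarrow> t \<le> x \<Longrightarrow> (f has_real_derivative f' t) (at t)"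
    and f'': "\<And>t. a \<le> t \<Longrightarrow> t \<le> x \<Longrightarrow> (f' has_real_derivative f'' t) (at t)"
    and nonneg: "\<And>t. a \<le> t \<Longrightarrow> t \<le> x \<Longrightarrow> 0 \<le> f'' t"
  shows "f a + f' a * (x - a) \<le> f x"
proof -
  have mono: "f' a \<le> f' t" if "a \<le> t" "t \<le> x" for t
  proof (rule DERIV_nonneg_imp_nondecreasing[OF \<open>a \<le> t\<close>])
    fix u
    assume "a \<le> u" "u \<le> t"
    then show "\<exists>y. (f' has_real_derivative y) (at u) \<and> 0 \<le> y"
      using f''[of u] nonneg[of u] that by auto
  qed
  have "f a - f' a * a \<le> f x - f' a * x"
  proof (rule DERIV_nonneg_imp_nondecreasing[OF \<open>a \<le> x\<close>])
    fix u
    assume "a \<le> u" "u \<le> x"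
    then show "\<exists>y. ((\<lambda>t. f t - f' a * t) has_real_derivative y) (at u) \<and> 0 \<le> y"
      using f'[of u] mono[of u] by (auto intro!: derivative_eq_intros)
  qed
  then show ?thesis
    by (simp add: algebra_simps)
qed

lemma diff_mult_diff_powr_pos:
  fixes t c e :: real
  assumes "0 < t" "0 < c" "0 < e" "t \<noteq> c"
  shows "0 < (t - c) * (t powr e - c powr e)"
proof (cases "t < c")
  case True
  then have "t powr e < c powr e"
    using assms by (intro powr_less_mono2) auto
  with True show ?thesis by (simp add: mult_neg_neg)
next
  case False
  then have "c < t" using assms by simp
  then have "c powr e < t powr e"
    using assms by (intro powr_less_mono2) auto
  with \<open>c < t\<close> show ?thesis by simp
qed

text \<open>A second antiderivative of \<open>t powr (p - 2)\<close> on \<open>t > 0\<close>; its logarithmic cases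
  \<open>p = 0\<close> and \<open>p = 1\<close> produce the special cases \<open>s = -1, 0, 1\<close> in the definition of \<^const>\<open>lam\<close>.\<close>

definition pow_antideriv2 :: "real \<Rightarrow> real \<Rightarrow> real" where
  "pow_antideriv2 p t =
    (if p = 0 then - ln t else if p = 1 then t * ln t else t powr p / (p * (p - 1)))"

definition pow_antideriv :: "real \<Rightarrow> real \<Rightarrow> real" where
  "pow_antideriv p t =
    (if p = 0 then - 1 / t else if p = 1 then ln t + 1 else t powr (p - 1) / (p - 1))"

lemma has_real_derivative_pow_antideriv2:
  assumes "0 < t"
  shows "(pow_antideriv2 p has_real_derivative pow_antideriv p t) (at t)"
proof -
  consider "p = 0" | "p = 1" | "p \<noteq> 0" "p \<noteq> 1" by blast
  then show ?thesis
  proof cases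
    case 1
    have "((\<lambda>t. - ln t) has_real_derivative - 1 / t) (at t)"
      using assms by (auto intro!: derivative_eq_intros)
    then show ?thesis
      using 1 by (simp add: pow_antideriv2_def [abs_def] pow_antideriv_def)
  next
    case 2
    have "((\<lambda>t. t * ln t) has_real_derivative ln t + 1) (at t)"
      using assms by (auto intro!: derivative_eq_intros)
    then show ?thesis
      using 2 by (simp add: pow_antideriv2_def [abs_def] pow_antideriv_def)
  next
    case 3
    have "((\<lambda>t. t powr p / (p * (p - 1))) has_real_derivative p * t powr (p - 1) / (p * (p - 1))) (at t)"
      using assms by (intro DERIV_cdivide has_real_derivative_powr)
    then show ?thesis
      using 3 by (simp add: pow_antideriv2_def [abs_def] pow_antideriv_def)
  qed
qed

lemma has_real_derivative_pow_antideriv: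
  assumes "0 < t"
  shows "(pow_antideriv p has_real_derivative t powr (p - 2)) (at t)"
proof -
  consider "p = 0" | "p = 1" | "p \<noteq> 0" "p \<noteq> 1" by blast
  then show ?thesis
  proof cases
    case 1
    have "((\<lambda>t. - 1 / t) has_real_derivative t powr (0 - 2)) (at t)"
      using assms by (auto intro!: derivative_eq_intros simp: powr_minus power2_eq_square field_simps)
    then show ?thesis
      using 1 by (simp add: pow_antideriv_def [abs_def])
  next
    case 2
    have "((\<lambda>t. ln t + 1) has_real_derivative t powr (1 - 2)) (at t)"
      using assms by (auto intro!: derivative_eq_intros simp: powr_minus field_simps)
    then show ?thesis
      using 2 by (simp add: pow_antideriv_def [abs_def])
  next
    case 3
    have "((\<lambda>t. t powr (p - 1) / (p - 1)) has_real_derivative (p - 1) * t powr (p - 1 - 1) / (p - 1)) (at t)"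
      using assms by (intro DERIV_cdivide has_real_derivative_powr)
    then show ?thesis
      using 3 by (simp add: pow_antideriv_def [abs_def])
  qed
qed

definition jensen_gap :: "real \<Rightarrow> real \<Rightarrow> real \<Rightarrow> real" where
  "jensen_gap p a b = pow_antideriv2 p a + pow_antideriv2 p b - 2 * pow_antideriv2 p ((a + b) / 2)"

lemma jensen_gap_pos:
  assumes "0 < a" "0 < b" "a \<noteq> b"
  shows "0 < jensen_gap p a b"
  using midpoint_gap_pos[OF assms, of "pow_antideriv2 p" "pow_antideriv p" "\<lambda>t. t powr (p - 2)" 0]
  by (simp add: jensen_gap_def has_real_derivative_pow_antideriv2 has_real_derivative_pow_antideriv)

lemma lam_eq_jensen_gap_ratio:
  assumes a: "0 < a" and b: "0 < b" and ab: "a \<noteq> b"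
  shows "lam s a b = jensen_gap (s + 1) a b / jensen_gap s a b"
proof -
  consider "s = -1" | "s = 0" | "s = 1" | "s \<noteq> -1" "s \<noteq> 0" "s \<noteq> 1" by blast
  then show ?thesis
  proof cases
    case 1
    have "jensen_gap s a b = 1/(2*a) + 1/(2*b) - 2/(a+b)"
      using 1 a b unfolding jensen_gap_def pow_antideriv2_def
      by (simp add: powr_minus divide_simps; simp add: algebra_simps)
    then show ?thesis
      using 1 ab by (simp add: lam_def jensen_gap_def pow_antideriv2_def)
  next
    case 2
    then show ?thesis
      using ab by (simp add: lam_def jensen_gap_def pow_antideriv2_def)
  next
    case 3
    have num: "jensen_gap (s + 1) a b = (b - a)^2 / 4"
      using 3 a b unfolding jensen_gap_def pow_antideriv2_def
      by (simp add: power2_eq_square field_simps)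
    have den: "jensen_gap s a b = a * ln a + b * ln b - (a + b) * ln ((a + b) / 2)"
      using 3 by (simp add: jensen_gap_def pow_antideriv2_def)
    show ?thesis
      using ab unfolding lam_def num den using 3 by simp
  next
    case 4
    define N where "N = a powr (s+1) + b powr (s+1) - 2 * ((a+b)/2) powr (s+1)"
    define D where "D = a powr s + b powr s - 2 * ((a+b)/2) powr s"
    have N: "jensen_gap (s + 1) a b = N / ((s + 1) * s)"
      using 4 unfolding jensen_gap_def pow_antideriv2_def N_def
      by (simp add: add_divide_distrib diff_divide_distrib)
    have D: "jensen_gap s a b = D / (s * (s - 1))"
      using 4 unfolding jensen_gap_def pow_antideriv2_def D_def
      by (simp add: add_divide_distrib diff_divide_distrib)
    have "D \<noteq> 0"
      using jensen_gap_pos[OF a b ab, of s] D by auto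
    then have "(s - 1) / (s + 1) * (N / D) = (N / ((s + 1) * s)) / (D / (s * (s - 1)))"
      using 4 by (simp add: divide_simps)
    then show ?thesis
      using 4 ab unfolding lam_def N D N_def D_def by simp
  qed
qed

lemma lam_pos:
  assumes "0 < a" "0 < b"
  shows "0 < lam s a b"
proof (cases "a = b")
  case False
  then show ?thesis
    using assms jensen_gap_pos[OF assms False] by (simp add: lam_eq_jensen_gap_ratio)
qed (simp add: lam_def assms)

lemma jensen_gap_cross_less:
  assumes a: "0 < a" and b: "0 < b" and ab: "a \<noteq> b" and "s < r" and c: "0 < c"
  shows "c powr (r - s) * (jensen_gap (s + 1) a b - c * jensen_gap s a b)
           < jensen_gap (r + 1) a b - c * jensen_gap r a b"
proof -
  define k where "k = c powr (r - s)"
  define F where "F t = pow_antideriv2 (r + 1) t - c * pow_antideriv2 r t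
                          - k * pow_antideriv2 (s + 1) t + k * c * pow_antideriv2 s t" for t
  define F' where "F' t = pow_antideriv (r + 1) t - c * pow_antideriv r t
                          - k * pow_antideriv (s + 1) t + k * c * pow_antideriv s t" for t
  define F'' where "F'' t = t powr (s - 2) * ((t - c) * (t powr (r - s) - k))" for t
  have dF: "(F has_real_derivative F' t) (at t)" if "0 < t" for t
    unfolding F_def [abs_def] F'_def
    by (intro DERIV_add DERIV_diff DERIV_cmult has_real_derivative_pow_antideriv2 that)
  have dF': "(F' has_real_derivative F'' t) (at t)" if t: "0 < t" for t
  proof -
    have "(F' has_real_derivative t powr (r + 1 - 2) - c * t powr (r - 2)
            - k * t powr (s + 1 - 2) + k * c * t powr (s - 2)) (at t)"
      unfolding F'_def [abs_def] by (intro DERIV_add DERIV_diff DERIV_cmult has_real_derivative_pow_antideriv t)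
    moreover have "t powr (r + 1 - 2) = t powr (s - 2) * t * t powr (r - s)"
                  "t powr (r - 2) = t powr (s - 2) * t powr (r - s)"
                  "t powr (s + 1 - 2) = t powr (s - 2) * t"
      using t by (simp_all add: powr_add [symmetric] powr_mult_base algebra_simps)
    ultimately show ?thesis
      by (simp add: F''_def algebra_simps)
  qed
  have "0 < F'' t" if "0 < t" "t \<noteq> c" for t
    using diff_mult_diff_powr_pos[of t c "r - s"] that c \<open>s < r\<close> by (simp add: F''_def k_def)
  moreover have "F'' c = 0"
    by (simp add: F''_def)
  ultimately have "2 * F ((a + b) / 2) < F a + F b"
    using midpoint_gap_pos[OF a b ab dF dF', of c] by (metis less_eq_real_def)
  then show ?thesis
    unfolding F_def jensen_gap_def k_def by (simp add: algebra_simps)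
qed

lemma lam_less_lam:
  assumes a: "0 < a" and b: "0 < b" and ab: "a \<noteq> b" and "s < r"
  shows "lam s a b < lam r a b"
proof -
  define c where "c = lam s a b"
  have gaps: "0 < jensen_gap s a b" "0 < jensen_gap r a b"
    using jensen_gap_pos[OF a b ab] by auto
  have "jensen_gap (s + 1) a b - c * jensen_gap s a b = 0"
    using gaps by (simp add: c_def lam_eq_jensen_gap_ratio[OF a b ab])
  then have "0 < jensen_gap (r + 1) a b - c * jensen_gap r a b"
    using jensen_gap_cross_less[OF a b ab \<open>s < r\<close>, of c] lam_pos[OF a b] by (simp add: c_def)
  then show ?thesis
    using gaps by (simp add: c_def lam_eq_jensen_gap_ratio[OF a b ab] field_simps)
qed

lemma lam_le_lam:
  assumes "0 < a" "0 < b" "s \<le> r"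
  shows "lam s a b \<le> lam r a b"
proof (cases "a = b \<or> s = r")
  case True
  then show ?thesis
    by (metis lam_def order_refl)
next
  case False
  then show ?thesis
    using lam_less_lam[of a b s r] assms by simp
qed

lemma lam_2_eq_AM:
  assumes "0 < a" "0 < b"
  shows "lam 2 a b = AM a b"
proof (cases "a = b")
  case False
  have den: "a^2 + b^2 - 2 * ((a + b) / 2)^2 = (a - b)^2 / 2"
    by (simp add: power2_eq_square field_simps)
  have num: "a^3 + b^3 - 2 * ((a + b) / 2)^3 = 3 * (a + b) * (a - b)^2 / 4"
    by (simp add: power2_eq_square power3_eq_cube field_simps)
  have "lam 2 a b = 1/3 * ((a^3 + b^3 - 2 * ((a + b) / 2)^3) / (a^2 + b^2 - 2 * ((a + b) / 2)^2))"
    using False assms by (simp add: lam_def)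
  also have "\<dots> = (a + b) / 2"
    unfolding num den using False by (simp add: field_simps)
  finally show ?thesis
    unfolding AM_def .
qed (simp add: lam_def AM_def)

definition gini_log :: "real \<Rightarrow> real" where
  "gini_log x = ((1 - x) * ln (1 - x) + (1 + x) * ln (1 + x)) / 2"

lemma Gini_scaled:
  assumes m: "0 < m" and x: "\<bar>x\<bar> < 1"
  shows "Gini (m * (1 - x)) (m * (1 + x)) = m * exp (gini_log x)"
proof -
  have pos: "0 < 1 - x" "0 < 1 + x"
    using x by auto
  have weights: "m * (1 - x) / (m * (1 - x) + m * (1 + x)) = (1 - x) / 2"
                "m * (1 + x) / (m * (1 - x) + m * (1 + x)) = (1 + x) / 2"
    using m by (simp_all add: field_simps)
  have "Gini (m * (1 - x)) (m * (1 + x))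
      = exp ((1 - x) / 2 * ln (m * (1 - x))) * exp ((1 + x) / 2 * ln (m * (1 + x)))"
    using m pos unfolding Gini_def weights by (simp add: powr_def)
  also have "\<dots> = exp ((1 - x) / 2 * (ln m + ln (1 - x)) + (1 + x) / 2 * (ln m + ln (1 + x)))"
    using m pos by (simp add: ln_mult exp_add)
  also have "\<dots> = exp (ln m + gini_log x)"
    by (simp add: gini_log_def field_simps)
  also have "\<dots> = m * exp (gini_log x)"
    using m by (simp add: exp_add)
  finally show ?thesis .
qed

lemma lam_5_scaled:
  assumes m: "0 < m" and x: "\<bar>x\<bar> < 1" "x \<noteq> 0"
  shows "lam 5 (m * (1 - x)) (m * (1 + x)) = m * ((30 + 30 * x^2 + 2 * x^4) / (30 + 15 * x^2))"
proof -
  define a b where "a = m * (1 - x)" and "b = m * (1 + x)"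
  have "0 < 1 - x" "0 < 1 + x"
    using x by auto
  then have ab: "0 < a" "0 < b" "a \<noteq> b" "(a + b) / 2 = m"
    using m x by (simp_all add: a_def b_def) (simp add: algebra_simps)
  have "lam 5 a b = 2/3 * ((a^6 + b^6 - 2 * m^6) / (a^5 + b^5 - 2 * m^5))"
    using ab m by (simp add: lam_def)
  also have "a^6 + b^6 - 2 * m^6 = m^6 * (30 * x^2 + 30 * x^4 + 2 * x^6)"
    unfolding a_def b_def by algebra
  also have "a^5 + b^5 - 2 * m^5 = m^5 * (20 * x^2 + 10 * x^4)"
    unfolding a_def b_def by algebra
  also have "2/3 * ((m^6 * (30 * x^2 + 30 * x^4 + 2 * x^6)) / (m^5 * (20 * x^2 + 10 * x^4)))
      = m * ((30 + 30 * x^2 + 2 * x^4) / (30 + 15 * x^2))"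
  proof -
    have "0 < x^2" "0 \<le> x^4"
      using x by simp_all
    then have "0 < 20 * x^2 + 10 * x^4" "0 < 30 + 15 * x^2"
      by linarith+
    then show ?thesis
      using m by (simp add: divide_simps; algebra)
  qed
  finally show ?thesis
    unfolding a_def b_def .
qed

text \<open>For \<open>g x = gini_log x - ln ((30 + 30 * x^2 + 2 * x^4) / (30 + 15 * x^2))\<close> the function
  differentiated here is \<open>g'\<close>; the next lemma shows \<open>g'' \<ge> 0\<close> in the variable \<open>y = x^2\<close>.\<close>

lemma lam_5_gap_second_derivative:
  fixes t :: real
  assumes "-1 < t" "t < 1"
  shows "((\<lambda>t. (ln (1 + t) - ln (1 - t)) / 2
             - (60 * t + 8 * t^3) / (30 + 30 * t^2 + 2 * t^4) + 2 * t / (2 + t^2))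
          has_real_derivative 1 / (1 - t^2)
             - (1800 - 1080 * t^2 - 120 * t^4 - 16 * t^6) / (30 + 30 * t^2 + 2 * t^4)^2
             + (4 - 2 * t^2) / (2 + t^2)^2) (at t)"
proof -
  have "0 \<le> t^2" "0 \<le> t^4"
    by simp_all
  then have pos: "0 < 30 + 30 * t^2 + 2 * t^4" "0 < 2 + t^2"
    by linarith+
  have "1 + t \<noteq> 0" "1 - t \<noteq> 0"
    using assms by auto
  moreover have "1 - t^2 = (1 + t) * (1 - t)"
    by (simp add: power2_eq_square algebra_simps)
  ultimately have d1: "((\<lambda>t. (ln (1 + t) - ln (1 - t)) / 2) has_real_derivative 1 / (1 - t^2)) (at t)"
    using assms by (auto intro!: derivative_eq_intros) (simp add: field_simps)
  have "(60 + 24 * t^2) * (30 + 30 * t^2 + 2 * t^4) - (60 * t + 8 * t^3) * (60 * t + 8 * t^3)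
      = 1800 - 1080 * t^2 - 120 * t^4 - 16 * t^6"
    by algebra
  then have d2: "((\<lambda>t. (60 * t + 8 * t^3) / (30 + 30 * t^2 + 2 * t^4)) has_real_derivative
      (1800 - 1080 * t^2 - 120 * t^4 - 16 * t^6) / (30 + 30 * t^2 + 2 * t^4)^2) (at t)"
    using pos by (auto intro!: derivative_eq_intros) (simp add: power2_eq_square)
  have "4 + 2 * t^2 - 4 * (t * t) = 4 - 2 * t^2"
    by (simp add: power2_eq_square)
  then have d3: "((\<lambda>t. 2 * t / (2 + t^2)) has_real_derivative (4 - 2 * t^2) / (2 + t^2)^2) (at t)"
    using pos by (auto intro!: derivative_eq_intros) (simp add: power2_eq_square)
  show ?thesis
    by (intro DERIV_add DERIV_diff d1 d2 d3)
qed

lemma lam_5_gap_second_derivative_nonneg: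
  fixes y :: real
  assumes "0 \<le> y" "y < 1"
  shows "0 \<le> 1 / (1 - y) - (1800 - 1080 * y - 120 * y^2 - 16 * y^3) / (30 + 30 * y + 2 * y^2)^2
              + (4 - 2 * y) / (2 + y)^2"
proof -
  define N A C B where "N = 30 + 30 * y + 2 * y^2" and "A = 1800 - 1080 * y - 120 * y^2 - 16 * y^3"
    and "C = 2 + y" and "B = 4 - 2 * y"
  have "0 \<le> y^2"
    by simp
  then have N: "0 < N" and C: "0 < C"
    using assms unfolding N_def C_def by linarith+
  have "N^2 * C^2 - (A * C^2 - B * N^2) * (1 - y)
      = y * (16920 + 13140 * y + 2944 * y^2 + 1412 * y^3 + y^4 * (184 - 4 * y))"
    unfolding N_def C_def A_def B_def by (simp add: algebra_simps power2_eq_square power3_eq_cube power4_eq_xxxx)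
  also have "\<dots> \<ge> 0"
    using assms by simp
  finally have "(A * C^2 - B * N^2) * (1 - y) \<le> N^2 * C^2"
    by linarith
  then have "A / N^2 - B / C^2 \<le> 1 / (1 - y)"
    using N C assms by (simp add: divide_simps)
  then show ?thesis
    unfolding N_def A_def C_def B_def by simp
qed

lemma lam_5_ratio_le_exp_gini_log:
  assumes "\<bar>x\<bar> < 1"
  shows "(30 + 30 * x^2 + 2 * x^4) / (30 + 15 * x^2) \<le> exp (gini_log x)"
proof -
  define g where "g t = gini_log t - ln (30 + 30 * t^2 + 2 * t^4) + ln (30 + 15 * t^2)" for t :: real
  define g' where "g' t = (ln (1 + t) - ln (1 - t)) / 2
      - (60 * t + 8 * t^3) / (30 + 30 * t^2 + 2 * t^4) + 2 * t / (2 + t^2)" for t :: real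
  define g'' where "g'' t = 1 / (1 - t^2)
      - (1800 - 1080 * t^2 - 120 * t^4 - 16 * t^6) / (30 + 30 * t^2 + 2 * t^4)^2
      + (4 - 2 * t^2) / (2 + t^2)^2" for t :: real
  have pos: "0 < 30 + 30 * t^2 + 2 * t^4" "0 < 30 + 15 * t^2" "0 < 2 + t^2" for t :: real
  proof -
    have "0 \<le> t^2" "0 \<le> t^4"
      by simp_all
    then show "0 < 30 + 30 * t^2 + 2 * t^4" "0 < 30 + 15 * t^2" "0 < 2 + t^2"
      by linarith+
  qed
  have "g 0 + g' 0 * (\<bar>x\<bar> - 0) \<le> g \<bar>x\<bar>"
  proof (rule deriv2_nonneg_imp_above_tangent)
    fix t :: real
    assume t: "0 \<le> t" "t \<le> \<bar>x\<bar>"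
    then have "-1 < t" "t < 1" "t^2 < 1"
      using assms by (auto simp: abs_square_less_1)
    have "(g has_real_derivative g' t) (at t)"
      using pos[of t] \<open>-1 < t\<close> \<open>t < 1\<close> unfolding g_def [abs_def] g'_def gini_log_def
      by (auto intro!: derivative_eq_intros) (simp add: field_simps)
    moreover have "(g' has_real_derivative g'' t) (at t)"
      using lam_5_gap_second_derivative [OF \<open>-1 < t\<close> \<open>t < 1\<close>]
      unfolding g'_def [abs_def] g''_def .
    ultimately show "(g has_real_derivative g' t) (at t)" "(g' has_real_derivative g'' t) (at t)"
      by auto
    show "0 \<le> g'' t"
      using lam_5_gap_second_derivative_nonneg[of "t^2"] \<open>t^2 < 1\<close> by (simp add: g''_def power_mult [symmetric])
  qed simp
  moreover have "g 0 = 0" "g' 0 = 0" "g \<bar>x\<bar> = g x"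
    by (simp_all add: g_def g'_def gini_log_def abs_if)
  ultimately have "ln ((30 + 30 * x^2 + 2 * x^4) / (30 + 15 * x^2)) \<le> gini_log x"
    using pos[of x] by (simp add: g_def ln_div)
  then show ?thesis
    using pos[of x] by (metis divide_pos_pos exp_le_cancel_iff exp_ln)
qed

lemma lam_5_le_Gini:
  assumes "0 < a" "0 < b"
  shows "lam 5 a b \<le> Gini a b"
proof (cases "a = b")
  case True
  then show ?thesis
    using assms by (simp add: lam_def Gini_def powr_add [symmetric])
next
  case False
  define m x where "m = (a + b) / 2" and "x = (b - a) / (a + b)"
  have mx: "0 < m" "\<bar>x\<bar> < 1" "x \<noteq> 0"
    using assms False by (auto simp: m_def x_def field_simps)
  have "a = m * (1 - x)" "b = m * (1 + x)"
    using assms by (simp_all add: m_def x_def field_simps)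
  then show ?thesis
    using lam_5_scaled[OF mx] Gini_scaled[OF mx(1,2)]
      mult_left_mono[OF lam_5_ratio_le_exp_gini_log[OF mx(2)], of m] mx(1)
    by simp
qed

text \<open>The excess of \<^term>\<open>lam s (1 - x) (1 + x)\<close> over \<^term>\<open>Gini (1 - x) (1 + x)\<close>, multiplied by
  the positive denominator of \<^const>\<open>lam\<close> and \<open>s + 1\<close>: without the quotient \<open>real_asymp\<close> can
  expand it for symbolic \<open>s\<close>.\<close>

lemma lam_Gini_cross_difference_asymp:
  fixes s :: real
  shows "((\<lambda>x. ((s - 1) * ((1 - x) powr (s + 1) + (1 + x) powr (s + 1) - 2)
                - (s + 1) * exp (gini_log x) * ((1 - x) powr s + (1 + x) powr s - 2)) / x^4)
          \<longlongrightarrow> (s + 1) * s * (s - 1) * (s - 5) / 6) (at_right 0)"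
  unfolding gini_log_def by (real_asymp simp add: field_simps)

lemma Gini_less_lam_near_diagonal:
  assumes "5 < s"
  shows "\<exists>x. 0 < x \<and> x < 1 \<and> Gini (1 - x) (1 + x) < lam s (1 - x) (1 + x)"
proof -
  define D D' where "D x = (1 - x) powr s + (1 + x) powr s - 2"
    and "D' x = (1 - x) powr (s + 1) + (1 + x) powr (s + 1) - 2" for x
  have "0 < (s + 1) * s * (s - 1) * (s - 5) / 6"
    using assms by simp
  from order_tendstoD(1)[OF lam_Gini_cross_difference_asymp this]
  have "\<forall>\<^sub>F x in at_right 0. 0 < ((s - 1) * D' x - (s + 1) * exp (gini_log x) * D x) / x^4"
    unfolding D_def D'_def .
  moreover have "\<forall>\<^sub>F x in at_right 0. 0 < x \<and> x < (1::real)"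
    unfolding eventually_at_right_field by (intro exI [of _ 1]) auto
  ultimately obtain x where x: "0 < x" "x < 1"
    and "0 < ((s - 1) * D' x - (s + 1) * exp (gini_log x) * D x) / x^4"
    using eventually_happens' [OF trivial_limit_at_right_real eventually_conj] by blast
  then have cross: "(s + 1) * exp (gini_log x) * D x < (s - 1) * D' x"
    by (simp add: zero_less_divide_iff)
  have "jensen_gap s (1 - x) (1 + x) = D x / (s * (s - 1))"
    using assms by (simp add: D_def jensen_gap_def pow_antideriv2_def add_divide_distrib diff_divide_distrib)
  moreover have "0 < jensen_gap s (1 - x) (1 + x)"
    using x by (intro jensen_gap_pos) auto
  moreover have "0 < s * (s - 1)"
    using assms by simp
  ultimately have pos: "0 < (s + 1) * D x"
    using assms by (simp add: zero_less_divide_iff)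
  have "Gini (1 - x) (1 + x) = exp (gini_log x)"
    using Gini_scaled [of 1 x] x by simp
  also have "\<dots> < (s - 1) * D' x / ((s + 1) * D x)"
    unfolding pos_less_divide_eq [OF pos] using cross by (simp add: algebra_simps)
  also have "\<dots> = lam s (1 - x) (1 + x)"
    using assms x by (simp add: lam_def D_def D'_def)
  finally show ?thesis
    using x by blast
qed

lemma AM_le_lam:
  assumes "0 < a" "0 < b" "2 \<le> s"
  shows "AM a b \<le> lam s a b"
  using lam_2_eq_AM [of a b] lam_le_lam [of a b 2 s] assms by simp

lemma lam_le_Gini:
  assumes "0 < a" "0 < b" "s \<le> 5"
  shows "lam s a b \<le> Gini a b"
  using lam_5_le_Gini [of a b] lam_le_lam [of a b s 5] assms by simp

lemma AM_le_lam_iff: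
  "(\<forall>a b::real. a > 0 \<longrightarrow> b > 0 \<longrightarrow> AM a b \<le> lam s a b) \<longleftrightarrow> 2 \<le> s"
proof
  assume "\<forall>a b::real. a > 0 \<longrightarrow> b > 0 \<longrightarrow> AM a b \<le> lam s a b"
  then have "lam 2 1 3 \<le> lam s 1 3"
    using lam_2_eq_AM [of 1 3] by simp
  moreover have "lam s 1 3 < lam 2 1 3" if "s < 2"
    using that by (intro lam_less_lam) auto
  ultimately show "2 \<le> s"
    by fastforce
qed (simp add: AM_le_lam)

lemma lam_le_Gini_iff:
  "(\<forall>a b::real. a > 0 \<longrightarrow> b > 0 \<longrightarrow> lam s a b \<le> Gini a b) \<longleftrightarrow> s \<le> 5"
proof
  assume bound: "\<forall>a b::real. a > 0 \<longrightarrow> b > 0 \<longrightarrow> lam s a b \<le> Gini a b"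
  show "s \<le> 5"
  proof (rule ccontr)
    assume "\<not> s \<le> 5"
    then obtain x where "0 < x" "x < 1" "Gini (1 - x) (1 + x) < lam s (1 - x) (1 + x)"
      using Gini_less_lam_near_diagonal [of s] by auto
    moreover have "lam s (1 - x) (1 + x) \<le> Gini (1 - x) (1 + x)"
      using bound \<open>0 < x\<close> \<open>x < 1\<close> by simp
    ultimately show False
      by simp
  qed
qed (simp add: lam_le_Gini)

theorem theorem3:
  shows "(\<forall>s::real. 2 \<le> s \<and> s \<le> 5 \<longrightarrow>
           (\<forall>a b::real. a > 0 \<longrightarrow> b > 0 \<longrightarrow>
              AM a b \<le> lam s a b \<and> lam s a b \<le> Gini a b))
       \<and> (\<forall>s::real. (\<forall>a b::real. a > 0 \<longrightarrow> b > 0 \<longrightarrow> AM a b \<le> lam s a b) \<longleftrightarrow> 2 \<le> s)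
       \<and> (\<forall>s::real. (\<forall>a b::real. a > 0 \<longrightarrow> b > 0 \<longrightarrow> lam s a b \<le> Gini a b) \<longleftrightarrow> s \<le> 5)"
proof -
  have "\<forall>s::real. 2 \<le> s \<and> s \<le> 5 \<longrightarrow>
          (\<forall>a b::real. a > 0 \<longrightarrow> b > 0 \<longrightarrow> AM a b \<le> lam s a b \<and> lam s a b \<le> Gini a b)"
    using AM_le_lam lam_le_Gini by blast
  then show ?thesis
    unfolding AM_le_lam_iff lam_le_Gini_iff by simp
qed

end
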